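(* Let $\mu$ be a Borel measure on $\mathbb{R}^n$ with $0<\mu(Q)<\infty$ for all $Q\in\mathcal{D}$. For any $f\in L^1_{\mathrm{loc}}(\mu)$ and any $Q\in\mathcal{D}$, $$\|\Delta_Qf\|_{L^1(\mu)}\le2\int_Q|f|\,d\mu.$$ Moreover, if $b\in\mathrm{BMO}(\mu)$, then for all $x$, $$\big|\mathbb{E}_Q(\Delta_Qb\,\Delta_Qf)(x)\big|\le2\,\|b\|_{\mathrm{BMO}}\,\langle|f|\rangle_Q.$$
   Context: $\mathcal{D}$ is the standard dyadic grid in $\mathbb{R}^n$; $\mathrm{ch}(Q)$ are the $2^n$ dyadic children of $Q$, $\widehat Q$ its parent; $\langle f\rangle_Q=\frac1{\mu(Q)}\int_Qf\,d\mu$, $\mathbb{E}_Qf=\langle f\rangle_Q\mathbf 1_Q$, $\Delta_Qf=\sum_{R\in\mathrm{ch}(Q)}\mathbb{E}_Rf-\mathbb{E}_Qf$. $\|b\|_{\mathrm{BMO}}=\sup_{Q\in\mathcal{D}}\frac1{\mu(Q)}\int_Q|b-\langle b\rangle_{\widehat Q}|\,d\mu$. *)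

theory Defs
  imports "HOL-Analysis.Analysis"
begin

definition dcube :: "int \<Rightarrow> ('n::finite \<Rightarrow> int) \<Rightarrow> (real^'n) set" where
  "dcube k j = {x. \<forall>i. real_of_int (j i) / 2 powr (real_of_int k) \<le> x $ i \<and>
                        x $ i < (real_of_int (j i) + 1) / 2 powr (real_of_int k)}"

definition dyadic :: "(real^'n::finite) set set" where
  "dyadic = {dcube k j | k j. True}"

definition dchildren :: "int \<Rightarrow> ('n::finite \<Rightarrow> int) \<Rightarrow> (real^'n) set set" where
  "dchildren k j = {dcube (k+1) j' | j'. \<forall>i. j' i = 2 * j i \<or> j' i = 2 * j i + 1}"

definition dparent :: "int \<Rightarrow> ('n::finite \<Rightarrow> int) \<Rightarrow> (real^'n) set" where
  "dparent k j = dcube (k - 1) (\<lambda>i. j i div 2)"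

definition avg :: "'a measure \<Rightarrow> ('a \<Rightarrow> real) \<Rightarrow> 'a set \<Rightarrow> real" where
  "avg M f Q = (\<integral>x. indicator Q x * f x \<partial>M) / measure M Q"

definition condE :: "'a measure \<Rightarrow> 'a set \<Rightarrow> ('a \<Rightarrow> real) \<Rightarrow> 'a \<Rightarrow> real" where
  "condE M Q f = (\<lambda>x. avg M f Q * indicator Q x)"

definition mdiff :: "(real^'n::finite) measure \<Rightarrow> int \<Rightarrow> ('n \<Rightarrow> int)
    \<Rightarrow> (real^'n \<Rightarrow> real) \<Rightarrow> real^'n \<Rightarrow> real" where
  "mdiff M k j f = (\<lambda>x. (\<Sum>R\<in>dchildren k j. condE M R f x) - condE M (dcube k j) f x)"

definition loc_integrable :: "(real^'n::finite) measure \<Rightarrow> (real^'n \<Rightarrow> real) \<Rightarrow> bool" where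
  "loc_integrable M f \<longleftrightarrow> f \<in> borel_measurable M \<and>
     (\<forall>K. compact K \<longrightarrow> set_integrable M K f)"

text \<open>Dyadic BMO (oscillation measured against the parent average).\<close>
definition bmo_osc :: "(real^'n::finite) measure \<Rightarrow> (real^'n \<Rightarrow> real) \<Rightarrow> int \<Rightarrow> ('n \<Rightarrow> int) \<Rightarrow> real" where
  "bmo_osc M b k j = (\<integral>x. indicator (dcube k j) x * \<bar>b x - avg M b (dparent k j)\<bar> \<partial>M)
                       / measure M (dcube k j)"

definition in_BMO :: "(real^'n::finite) measure \<Rightarrow> (real^'n \<Rightarrow> real) \<Rightarrow> bool" where
  "in_BMO M b \<longleftrightarrow> loc_integrable M b \<and> bdd_above (range (\<lambda>(k, j). bmo_osc M b k j))"

definition bmo_norm :: "(real^'n::finite) measure \<Rightarrow> (real^'n \<Rightarrow> real) \<Rightarrow> real" where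
  "bmo_norm M b = (SUP kj. (\<lambda>(k, j). bmo_osc M b k j) kj)"

end

theory Submission
  imports Defs
begin

text \<open>
  Both estimates rest on the fact that \<open>\<Delta>\<^sub>Q f\<close> is the step function
  \<open>\<Sum>\<^sub>R (\<langle>f\<rangle>\<^sub>R - \<langle>f\<rangle>\<^sub>Q) 1\<^sub>R\<close> over the children \<open>R\<close> of \<open>Q\<close>. Hence
  \<open>\<parallel>\<Delta>\<^sub>Q f\<parallel>\<^sub>1 = \<Sum>\<^sub>R \<bar>\<langle>f\<rangle>\<^sub>R - \<langle>f\<rangle>\<^sub>Q\<bar> \<mu>(R)\<close>, which the triangle inequality and
  \<open>\<bar>\<langle>f\<rangle>\<^sub>R\<bar> \<mu>(R) \<le> \<integral>\<^sub>R \<bar>f\<bar>\<close> bound by \<open>2 \<integral>\<^sub>Q \<bar>f\<bar>\<close>. The product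
  \<open>\<Delta>\<^sub>Q b \<Delta>\<^sub>Q f\<close> is again constant on each child, so its average over \<open>Q\<close> is
  \<open>\<mu>(Q)\<^sup>-\<^sup>1 \<Sum>\<^sub>R (\<langle>b\<rangle>\<^sub>R - \<langle>b\<rangle>\<^sub>Q)(\<langle>f\<rangle>\<^sub>R - \<langle>f\<rangle>\<^sub>Q) \<mu>(R)\<close>; since \<open>Q\<close> is the parent of
  \<open>R\<close>, each factor \<open>\<bar>\<langle>b\<rangle>\<^sub>R - \<langle>b\<rangle>\<^sub>Q\<bar>\<close> is at most the oscillation of \<open>b\<close> on \<open>R\<close>,
  hence at most \<open>\<parallel>b\<parallel>\<^sub>B\<^sub>M\<^sub>O\<close>, and the first bound finishes the proof. Apart from this
  last step only the fact that the children partition \<open>Q\<close> into finitely many sets of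
  finite measure is used.
\<close>

lemma abs_avg_le_avg_abs: "\<bar>avg M f R\<bar> \<le> avg M (\<lambda>x. \<bar>f x\<bar>) R"
proof -
  have "\<bar>\<integral>x. indicator R x * f x \<partial>M\<bar> \<le> (\<integral>x. indicator R x * \<bar>f x\<bar> \<partial>M)"
    using integral_abs_bound[of M "\<lambda>x. indicator R x * f x"] by (simp add: abs_mult)
  then show ?thesis
    unfolding avg_def by (simp add: divide_right_mono)
qed

lemma abs_avg_mult_measure_le:
  "\<bar>avg M f R\<bar> * measure M R \<le> (\<integral>x. indicator R x * \<bar>f x\<bar> \<partial>M)"
proof (cases "measure M R = 0")
  case True
  then show ?thesis by (simp add: integral_nonneg)
next
  case False
  have "\<bar>avg M f R\<bar> * measure M R \<le> avg M (\<lambda>x. \<bar>f x\<bar>) R * measure M R"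
    by (intro mult_right_mono abs_avg_le_avg_abs) simp
  also have "\<dots> = (\<integral>x. indicator R x * \<bar>f x\<bar> \<partial>M)"
    using False by (simp add: avg_def)
  finally show ?thesis .
qed

lemma avg_diff_const:
  assumes "R \<in> fmeasurable M" "measure M R \<noteq> 0" "integrable M (\<lambda>x. indicator R x * f x)"
  shows "avg M (\<lambda>x. f x - c) R = avg M f R - c"
proof -
  have "integrable M (\<lambda>x. c * indicator R x)"
    using assms(1) by (simp add: fmeasurable_def)
  then have "(\<integral>x. indicator R x * (f x - c) \<partial>M) = (\<integral>x. indicator R x * f x \<partial>M) - c * measure M R"
    using assms(1,3) by (simp add: right_diff_distrib mult.commute[of _ c] fmeasurableD sets.Int_space_eq2)
  then show ?thesis
    using assms(2) unfolding avg_def by (simp add: diff_divide_distrib)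
qed

lemma abs_avg_diff_const_le:
  assumes "R \<in> fmeasurable M" "measure M R \<noteq> 0" "integrable M (\<lambda>x. indicator R x * f x)"
  shows "\<bar>avg M f R - c\<bar> \<le> avg M (\<lambda>x. \<bar>f x - c\<bar>) R"
  using abs_avg_le_avg_abs[of M "\<lambda>x. f x - c" R] avg_diff_const[OF assms] by simp

locale finite_partition =
  fixes M :: "'a measure" and Q :: "'a set" and C :: "'a set set"
  assumes finite_parts: "finite C"
    and disjoint_parts: "disjoint C"
    and Union_parts: "\<Union>C = Q"
    and parts_fmeasurable: "C \<subseteq> fmeasurable M"
begin

definition mart_diff :: "('a \<Rightarrow> real) \<Rightarrow> 'a \<Rightarrow> real" where
  "mart_diff f = (\<lambda>x. (\<Sum>R\<in>C. condE M R f x) - condE M Q f x)"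

lemma part_subset: "R \<in> C \<Longrightarrow> R \<subseteq> Q"
  using Union_parts by blast

lemma integrable_indicator_part: "R \<in> C \<Longrightarrow> integrable M (indicator R :: 'a \<Rightarrow> real)"
  using parts_fmeasurable by (auto simp: fmeasurable_def)

lemma mem_Q_cases:
  obtains R where "R \<in> C" "x \<in> R" "x \<in> Q" | "x \<notin> Q"
  using Union_parts by blast

lemma sum_parts_indicator_in:
  assumes "R0 \<in> C" "x \<in> R0"
  shows "(\<Sum>R\<in>C. g R * indicator R x) = (g R0 :: real)"
  using assms finite_parts disjoint_parts
  by (intro sum_indicator_disjoint_family[where A = "\<lambda>R. R"])
     (auto simp: disjoint_family_on_def dest: disjointD)

lemma sum_parts_indicator_out:
  assumes "x \<notin> Q"
  shows "(\<Sum>R\<in>C. g R * indicator R x) = (0 :: real)"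
  using assms part_subset by (intro sum.neutral) (auto split: split_indicator)

lemma sum_parts_indicator: "(\<Sum>R\<in>C. indicator R x) = (indicator Q x :: real)"
  using sum_parts_indicator_in[of _ x "\<lambda>_. 1"] sum_parts_indicator_out[of x "\<lambda>_. 1"]
  by (cases x rule: mem_Q_cases) auto

lemma abs_sum_parts_indicator:
  "\<bar>\<Sum>R\<in>C. g R * indicator R x\<bar> = (\<Sum>R\<in>C. \<bar>g R\<bar> * indicator R x :: real)"
  by (cases x rule: mem_Q_cases) (simp_all add: sum_parts_indicator_in sum_parts_indicator_out)

lemma sum_parts_indicator_mult:
  "(\<Sum>R\<in>C. g R * indicator R x) * (\<Sum>R\<in>C. h R * indicator R x) =
   (\<Sum>R\<in>C. g R * h R * indicator R x :: real)"
  by (cases x rule: mem_Q_cases) (simp_all add: sum_parts_indicator_in sum_parts_indicator_out)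

lemma indicator_mult_sum_parts:
  "indicator Q x * (\<Sum>R\<in>C. g R * indicator R x) = (\<Sum>R\<in>C. g R * indicator R x :: real)"
  by (cases x rule: mem_Q_cases) (simp_all add: sum_parts_indicator_in sum_parts_indicator_out)

lemma integral_sum_parts_indicator:
  "(\<integral>x. (\<Sum>R\<in>C. g R * indicator R x) \<partial>M) = (\<Sum>R\<in>C. g R * measure M R)"
proof -
  have "(\<integral>x. (\<Sum>R\<in>C. g R * indicator R x) \<partial>M) = (\<Sum>R\<in>C. (\<integral>x. g R * indicator R x \<partial>M))"
    by (intro Bochner_Integration.integral_sum integrable_mult_right integrable_indicator_part)
  also have "\<dots> = (\<Sum>R\<in>C. g R * measure M R)"
    using parts_fmeasurable by (intro sum.cong) (auto simp: sets.Int_space_eq2 fmeasurableD)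
  finally show ?thesis .
qed

lemma sum_measure_parts: "(\<Sum>R\<in>C. measure M R) = measure M Q"
proof -
  have "measure M (\<Union>C) = (\<Sum>R\<in>C. measure M R)"
    using parts_fmeasurable by (intro measure_Union' finite_parts disjoint_parts) auto
  then show ?thesis
    using Union_parts by simp
qed

lemma sum_integral_parts:
  fixes f :: "'a \<Rightarrow> real"
  assumes "integrable M (\<lambda>x. indicator Q x * f x)"
  shows "(\<Sum>R\<in>C. (\<integral>x. indicator R x * f x \<partial>M)) = (\<integral>x. indicator Q x * f x \<partial>M)"
proof -
  have "integrable M (\<lambda>x. indicator R x * f x)" if "R \<in> C" for R
  proof -
    have "integrable M (\<lambda>x. indicator R x *\<^sub>R (indicator Q x * f x))"
      using that parts_fmeasurable by (intro integrable_mult_indicator assms) (auto simp: fmeasurableD)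
    moreover have "indicator R x * (indicator Q x * f x) = indicator R x * f x" for x
      using part_subset[OF that] by (auto split: split_indicator)
    ultimately show ?thesis
      by simp
  qed
  then have "(\<Sum>R\<in>C. (\<integral>x. indicator R x * f x \<partial>M)) = (\<integral>x. (\<Sum>R\<in>C. indicator R x * f x) \<partial>M)"
    by (rule Bochner_Integration.integral_sum[symmetric])
  also have "\<dots> = (\<integral>x. indicator Q x * f x \<partial>M)"
    by (simp only: sum_distrib_right[symmetric] sum_parts_indicator)
  finally show ?thesis .
qed

lemma mart_diff_eq:
  "mart_diff f x = (\<Sum>R\<in>C. (avg M f R - avg M f Q) * indicator R x)"
proof -
  have "avg M f Q * indicator Q x = (\<Sum>R\<in>C. avg M f Q * indicator R x)"
    by (simp add: sum_distrib_left[symmetric] sum_parts_indicator)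
  then show ?thesis
    by (simp add: mart_diff_def condE_def left_diff_distrib sum_subtractf)
qed

lemma integrable_mart_diff: "integrable M (mart_diff f)"
  unfolding mart_diff_eq[abs_def]
  by (intro Bochner_Integration.integrable_sum integrable_mult_right integrable_indicator_part)

lemma sum_abs_avg_diff_le:
  fixes f :: "'a \<Rightarrow> real"
  assumes "integrable M (\<lambda>x. indicator Q x * f x)"
  shows "(\<Sum>R\<in>C. \<bar>avg M f R - avg M f Q\<bar> * measure M R) \<le> 2 * (\<integral>x. indicator Q x * \<bar>f x\<bar> \<partial>M)"
proof -
  let ?I = "\<lambda>R. \<integral>x. indicator R x * \<bar>f x\<bar> \<partial>M"
  have "(\<Sum>R\<in>C. \<bar>avg M f R - avg M f Q\<bar> * measure M R)
      \<le> (\<Sum>R\<in>C. \<bar>avg M f R\<bar> * measure M R + \<bar>avg M f Q\<bar> * measure M R)"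
    by (intro sum_mono) (simp add: abs_triangle_ineq4 mult_right_mono flip: distrib_right)
  also have "\<dots> = (\<Sum>R\<in>C. \<bar>avg M f R\<bar> * measure M R) + \<bar>avg M f Q\<bar> * measure M Q"
    by (simp add: sum.distrib sum_distrib_left[symmetric] sum_measure_parts)
  also have "\<dots> \<le> (\<Sum>R\<in>C. ?I R) + ?I Q"
    by (intro add_mono sum_mono abs_avg_mult_measure_le)
  also have "(\<Sum>R\<in>C. ?I R) = ?I Q"
    using integrable_abs[OF assms] by (intro sum_integral_parts) (simp add: abs_mult)
  finally show ?thesis
    by simp
qed

lemma integral_abs_mart_diff_le:
  fixes f :: "'a \<Rightarrow> real"
  assumes "integrable M (\<lambda>x. indicator Q x * f x)"
  shows "(\<integral>x. \<bar>mart_diff f x\<bar> \<partial>M) \<le> 2 * (\<integral>x. indicator Q x * \<bar>f x\<bar> \<partial>M)"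
  using sum_abs_avg_diff_le[OF assms]
  by (simp add: mart_diff_eq abs_sum_parts_indicator integral_sum_parts_indicator)

lemma avg_mart_diff_mult:
  "avg M (\<lambda>x. mart_diff b x * mart_diff f x) Q =
   (\<Sum>R\<in>C. (avg M b R - avg M b Q) * (avg M f R - avg M f Q) * measure M R) / measure M Q"
  by (simp add: avg_def mart_diff_eq sum_parts_indicator_mult indicator_mult_sum_parts
      integral_sum_parts_indicator)

lemma abs_condE_mart_diff_mult_le:
  fixes f :: "'a \<Rightarrow> real"
  assumes f: "integrable M (\<lambda>x. indicator Q x * f x)"
    and N: "0 \<le> N" "\<And>R. R \<in> C \<Longrightarrow> \<bar>avg M b R - avg M b Q\<bar> \<le> N"
  shows "\<bar>condE M Q (\<lambda>y. mart_diff b y * mart_diff f y) x\<bar> \<le> 2 * N * avg M (\<lambda>y. \<bar>f y\<bar>) Q"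
proof -
  let ?g = "\<lambda>y. mart_diff b y * mart_diff f y"
  have "\<bar>condE M Q ?g x\<bar> \<le> \<bar>avg M ?g Q\<bar>"
    by (simp add: condE_def abs_mult split: split_indicator)
  also have "\<dots> = \<bar>\<Sum>R\<in>C. (avg M b R - avg M b Q) * (avg M f R - avg M f Q) * measure M R\<bar> / measure M Q"
    by (simp only: avg_mart_diff_mult abs_divide abs_of_nonneg[OF measure_nonneg])
  also have "\<dots> \<le> (\<Sum>R\<in>C. N * (\<bar>avg M f R - avg M f Q\<bar> * measure M R)) / measure M Q"
    by (intro divide_right_mono order_trans[OF sum_abs sum_mono])
       (simp_all add: abs_mult mult.assoc mult_right_mono N(2))
  also have "\<dots> \<le> N * (2 * (\<integral>x. indicator Q x * \<bar>f x\<bar> \<partial>M)) / measure M Q"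
    by (intro divide_right_mono)
       (simp_all add: sum_distrib_left[symmetric] mult_left_mono sum_abs_avg_diff_le[OF f] N(1))
  also have "\<dots> = 2 * N * avg M (\<lambda>y. \<bar>f y\<bar>) Q"
    by (simp add: avg_def)
  finally show ?thesis .
qed

end

lemma floor_eq_iff_floor_double:
  "\<lfloor>y::real\<rfloor> = a \<longleftrightarrow> \<lfloor>2 * y\<rfloor> = 2 * a \<or> \<lfloor>2 * y\<rfloor> = 2 * a + 1"
  by (simp add: floor_eq_iff) linarith

lemma dcube_in_borel: "dcube k j \<in> sets (borel :: (real^'n::finite) measure)"
proof -
  have "dcube k j = (\<Inter>i. {x::real^'n. real_of_int (j i) / 2 powr real_of_int k \<le> x $ i} \<inter>
                            {x. x $ i < (real_of_int (j i) + 1) / 2 powr real_of_int k})"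
    by (auto simp: dcube_def)
  also have "\<dots> \<in> sets borel"
    by measurable
  finally show ?thesis .
qed

lemma mem_dcube_iff_floor: "x \<in> dcube k j \<longleftrightarrow> (\<forall>i. \<lfloor>x $ i * 2 powr real_of_int k\<rfloor> = j i)"
proof -
  have "real_of_int (j i) / 2 powr real_of_int k \<le> x $ i \<and>
        x $ i < (real_of_int (j i) + 1) / 2 powr real_of_int k
        \<longleftrightarrow> \<lfloor>x $ i * 2 powr real_of_int k\<rfloor> = j i" for i
    unfolding floor_eq_iff by (simp add: pos_divide_le_eq pos_less_divide_eq)
  then show ?thesis
    unfolding dcube_def by (auto simp del: floor_eq_iff)
qed

lemma dcube_index_unique: "x \<in> dcube k j1 \<Longrightarrow> x \<in> dcube k j2 \<Longrightarrow> j1 = j2"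
  by (auto simp: mem_dcube_iff_floor)

lemma mem_dcube_add_one_iff_floor:
  "x \<in> dcube (k + 1) j \<longleftrightarrow> (\<forall>i. \<lfloor>2 * (x $ i * 2 powr real_of_int k)\<rfloor> = j i)"
proof -
  have "(2::real) powr real_of_int (k + 1) = 2 * 2 powr real_of_int k"
    by (simp add: powr_add)
  then show ?thesis
    unfolding mem_dcube_iff_floor by (simp only: mult.left_commute)
qed

lemma mem_dcube_iff_mem_child:
  "x \<in> dcube k j \<longleftrightarrow> (\<exists>j'. (\<forall>i. j' i = 2 * j i \<or> j' i = 2 * j i + 1) \<and> x \<in> dcube (k + 1) j')"
proof -
  let ?y = "\<lambda>i. x $ i * 2 powr real_of_int k"
  have "x \<in> dcube k j \<longleftrightarrow> (\<forall>i. \<lfloor>2 * ?y i\<rfloor> = 2 * j i \<or> \<lfloor>2 * ?y i\<rfloor> = 2 * j i + 1)"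
    unfolding mem_dcube_iff_floor by (intro all_cong1 floor_eq_iff_floor_double)
  also have "\<dots> \<longleftrightarrow> (\<exists>j'. (\<forall>i. j' i = 2 * j i \<or> j' i = 2 * j i + 1) \<and> (\<forall>i. \<lfloor>2 * ?y i\<rfloor> = j' i))"
    by (rule iffI, rule exI[of _ "\<lambda>i. \<lfloor>2 * ?y i\<rfloor>"]) auto
  also have "\<dots> \<longleftrightarrow> (\<exists>j'. (\<forall>i. j' i = 2 * j i \<or> j' i = 2 * j i + 1) \<and> x \<in> dcube (k + 1) j')"
    by (simp only: mem_dcube_add_one_iff_floor)
  finally show ?thesis .
qed

lemma finite_dchildren: "finite (dchildren k j)"
proof -
  have "{j'. \<forall>i. j' i = 2 * j i \<or> j' i = 2 * j i + 1} = Pi\<^sub>E UNIV (\<lambda>i. {2 * j i, 2 * j i + 1})"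
    by (auto simp: PiE_UNIV_domain)
  then have "finite {j'. \<forall>i. j' i = 2 * j i \<or> j' i = 2 * j i + 1}"
    by (simp add: finite_PiE)
  moreover have "dchildren k j = dcube (k + 1) ` {j'. \<forall>i. j' i = 2 * j i \<or> j' i = 2 * j i + 1}"
    by (auto simp: dchildren_def)
  ultimately show ?thesis
    by simp
qed

lemma Union_dchildren: "\<Union>(dchildren k j) = dcube k j"
  unfolding dchildren_def using mem_dcube_iff_mem_child[of _ k j] by blast

lemma disjoint_dchildren: "disjoint (dchildren k j)"
  by (auto simp: disjoint_def dchildren_def dest: dcube_index_unique)

lemma dparent_of_dchild:
  assumes "R \<in> dchildren k j"
  obtains j' where "R = dcube (k + 1) j'" "dparent (k + 1) j' = dcube k j"
proof -
  obtain j' where j': "R = dcube (k + 1) j'" "\<forall>i. j' i = 2 * j i \<or> j' i = 2 * j i + 1"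
    using assms by (auto simp: dchildren_def)
  have "(\<lambda>i. j' i div 2) = j"
  proof
    fix i
    show "j' i div 2 = j i"
      using j'(2)[rule_format, of i] by presburger
  qed
  with j' show ?thesis
    using that by (simp add: dparent_def)
qed

lemma dcube_subset_cbox:
  "dcube k j \<subseteq> cbox (\<chi> i. real_of_int (j i) / 2 powr real_of_int k)
                         (\<chi> i. (real_of_int (j i) + 1) / 2 powr real_of_int k)"
  by (auto simp: dcube_def mem_box_cart less_imp_le)

lemma dcube_fmeasurable:
  assumes "sets M = sets borel" "emeasure M (dcube k j) < \<infinity>"
  shows "dcube k j \<in> fmeasurable M"
  using assms dcube_in_borel by (simp add: fmeasurable_def)

lemma integrable_indicator_dcube_mult:
  assumes "sets M = sets borel" "loc_integrable M f"
  shows "integrable M (\<lambda>x. indicator (dcube k j) x * f x)"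
proof -
  have "set_integrable M (cbox (\<chi> i. real_of_int (j i) / 2 powr real_of_int k)
                               (\<chi> i. (real_of_int (j i) + 1) / 2 powr real_of_int k)) f"
    using assms(2) compact_cbox unfolding loc_integrable_def by blast
  then have "set_integrable M (dcube k j) f"
    using assms(1) dcube_in_borel by (intro set_integrable_subset[OF _ _ dcube_subset_cbox]) auto
  then show ?thesis
    by (simp add: set_integrable_def)
qed

lemma finite_partition_dchildren:
  assumes "sets M = sets borel" "\<And>j'. emeasure M (dcube (k + 1) j') < \<infinity>"
  shows "finite_partition M (dcube k j) (dchildren k j)"
proof -
  have "dcube (k + 1) j' \<in> fmeasurable M" for j'
    using assms by (rule dcube_fmeasurable)
  then have "dchildren k j \<subseteq> fmeasurable M"
    by (auto simp: dchildren_def)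
  then show ?thesis
    using finite_dchildren disjoint_dchildren Union_dchildren by (rule finite_partition.intro[rotated 3])
qed

lemma bmo_osc_eq_avg: "bmo_osc M b k j = avg M (\<lambda>x. \<bar>b x - avg M b (dparent k j)\<bar>) (dcube k j)"
  by (simp add: bmo_osc_def avg_def)

lemma bmo_osc_le_bmo_norm:
  assumes "in_BMO M b"
  shows "bmo_osc M b k j \<le> bmo_norm M b"
proof -
  have "bdd_above (range (\<lambda>(k, j). bmo_osc M b k j))"
    using assms by (simp add: in_BMO_def)
  from cSUP_upper[OF UNIV_I this, of "(k, j)"] show ?thesis
    by (simp add: bmo_norm_def)
qed

lemma bmo_norm_nonneg:
  assumes "in_BMO M b"
  shows "0 \<le> bmo_norm M b"
proof -
  have "0 \<le> bmo_osc M b 0 (\<lambda>_. 0)"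
    unfolding bmo_osc_def by (intro divide_nonneg_nonneg integral_nonneg) auto
  also have "\<dots> \<le> bmo_norm M b"
    using assms by (rule bmo_osc_le_bmo_norm)
  finally show ?thesis .
qed

lemma abs_avg_dchild_diff_le_bmo_norm:
  assumes borel: "sets M = sets borel"
    and pos: "\<And>k' j'. 0 < emeasure M (dcube k' j')"
    and fin: "\<And>k' j'. emeasure M (dcube k' j') < \<infinity>"
    and b: "in_BMO M b" and R: "R \<in> dchildren k j"
  shows "\<bar>avg M b R - avg M b (dcube k j)\<bar> \<le> bmo_norm M b"
proof -
  obtain j' where j': "R = dcube (k + 1) j'" "dparent (k + 1) j' = dcube k j"
    using dparent_of_dchild[OF R] .
  have "R \<in> fmeasurable M"
    using j'(1) borel fin by (simp add: dcube_fmeasurable)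
  moreover have "measure M R \<noteq> 0"
    using pos[of "k + 1" j'] fin[of "k + 1" j'] j'(1) by (auto simp: measure_def enn2real_eq_0_iff)
  moreover have "integrable M (\<lambda>x. indicator R x * b x)"
    using j'(1) borel b by (simp add: integrable_indicator_dcube_mult in_BMO_def)
  ultimately have "\<bar>avg M b R - avg M b (dparent (k + 1) j')\<bar>
      \<le> avg M (\<lambda>x. \<bar>b x - avg M b (dparent (k + 1) j')\<bar>) R"
    by (rule abs_avg_diff_const_le)
  then have "\<bar>avg M b R - avg M b (dcube k j)\<bar> \<le> bmo_osc M b (k + 1) j'"
    unfolding bmo_osc_eq_avg j' .
  also have "\<dots> \<le> bmo_norm M b"
    using b by (rule bmo_osc_le_bmo_norm)
  finally show ?thesis .
qed

theorem mainTheorem7: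
  fixes M :: "(real^'n::finite) measure"
    and f b :: "real^'n \<Rightarrow> real" and k :: int and j :: "'n \<Rightarrow> int"
  assumes borel: "sets M = sets borel"
    and pos: "\<And>k' j'. 0 < emeasure M (dcube k' j')"
    and fin: "\<And>k' j'. emeasure M (dcube k' j') < \<infinity>"
    and f: "loc_integrable M f"
  shows "integrable M (mdiff M k j f) \<and>
         (\<integral>x. \<bar>mdiff M k j f x\<bar> \<partial>M) \<le> 2 * (\<integral>x. indicator (dcube k j) x * \<bar>f x\<bar> \<partial>M) \<and>
         (in_BMO M b \<longrightarrow> (\<forall>x.
         \<bar>condE M (dcube k j) (\<lambda>y. mdiff M k j b y * mdiff M k j f y) x\<bar>
           \<le> 2 * bmo_norm M b * avg M (\<lambda>y. \<bar>f y\<bar>) (dcube k j)))"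
proof -
  interpret finite_partition M "dcube k j" "dchildren k j"
    using borel fin by (rule finite_partition_dchildren)
  have fQ: "integrable M (\<lambda>x. indicator (dcube k j) x * f x)"
    using borel f by (rule integrable_indicator_dcube_mult)
  have "\<bar>condE M (dcube k j) (\<lambda>y. mart_diff b y * mart_diff f y) x\<bar>
          \<le> 2 * bmo_norm M b * avg M (\<lambda>y. \<bar>f y\<bar>) (dcube k j)" if "in_BMO M b" for x
    using abs_condE_mart_diff_mult_le[OF fQ bmo_norm_nonneg[OF that]
        abs_avg_dchild_diff_le_bmo_norm[OF borel pos fin that]] .
  moreover have "mdiff M k j = mart_diff"
    by (simp add: fun_eq_iff mdiff_def mart_diff_def)
  ultimately show ?thesis
    using integrable_mart_diff integral_abs_mart_diff_le[OF fQ] by simp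
qed

end
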